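(* Let $\mathcal F$ be a proper filter on $\omega$ and consider the game $\mathfrak G(\mathcal F,[\omega]^{<\omega},\mathcal F)$. Then (1) player I has no winning strategy if and only if $\mathcal F$ is a non-meager P-filter; (2) player II never has a winning strategy.
   Context: A filter on $\omega$ is a family $\mathcal F\subseteq\mathcal P(\omega)$ closed under finite intersections and supersets and containing all cofinite sets; it is proper if all its members are infinite. $\mathcal P(\omega)$ is identified with $2^\omega$ with the product topology; "meager" refers to this topology. $\mathcal F$ is a P-filter if for every sequence $\langle X_n\rangle\subseteq\mathcal F$ there is $X\in\mathcal F$ with $X\setminus X_n$ finite for all $n$. Game $\mathfrak G(\mathcal X,[\omega]^{<\omega},\mathcal Z)$: at each stage $k\in\omega$, player I chooses $X_k\in\mathcal X$ and player II responds with a nonempty finite set $s_k\subseteq X_k$; II wins if $\bigcup_k s_k\in\mathcal Z$, otherwise I wins. *)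

theory Defs
  imports "HOL-Analysis.Analysis"
begin

definition is_filter :: "nat set set \<Rightarrow> bool" where
  "is_filter F \<longleftrightarrow>
     (\<forall>A\<in>F. \<forall>B\<in>F. A \<inter> B \<in> F) \<and>
     (\<forall>A\<in>F. \<forall>B. A \<subseteq> B \<longrightarrow> B \<in> F) \<and>
     (\<forall>A. finite (- A) \<longrightarrow> A \<in> F)"

definition proper_filter :: "nat set set \<Rightarrow> bool" where
  "proper_filter F \<longleftrightarrow> is_filter F \<and> (\<forall>A\<in>F. infinite A)"

definition P_filter :: "nat set set \<Rightarrow> bool" where
  "P_filter F \<longleftrightarrow> is_filter F \<and>
     (\<forall>Xs :: nat \<Rightarrow> nat set. (\<forall>n. Xs n \<in> F) \<longrightarrow>
        (\<exists>X\<in>F. \<forall>n. finite (X - Xs n)))"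

definition nowhere_dense :: "'a::topological_space set \<Rightarrow> bool" where
  "nowhere_dense S \<longleftrightarrow> interior (closure S) = {}"

definition meager :: "'a::topological_space set \<Rightarrow> bool" where
  "meager S \<longleftrightarrow> (\<exists>N :: nat \<Rightarrow> 'a set. (\<forall>n. nowhere_dense (N n)) \<and> S \<subseteq> (\<Union>n. N n))"

text \<open>P(omega) is identified with 2^omega = (nat => bool) with the product topology
  (bool carries its order topology, which is discrete), via characteristic functions.\<close>

definition char_fun :: "nat set \<Rightarrow> (nat \<Rightarrow> bool)" where
  "char_fun A = (\<lambda>n. n \<in> A)"

definition meager_family :: "nat set set \<Rightarrow> bool" where
  "meager_family F \<longleftrightarrow> meager (char_fun ` F)"

text \<open>A strategy for player I maps the list of
  II's previous moves to I's next move (I's own earlier moves are determined by them).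
  A strategy for player II maps the list of I's moves so far (ending in the current
  move X_k) to a nonempty finite subset of X_k.\<close>

definition strategy_I :: "nat set set \<Rightarrow> (nat set list \<Rightarrow> nat set) \<Rightarrow> bool" where
  "strategy_I \<X> \<sigma> \<longleftrightarrow> (\<forall>h. \<sigma> h \<in> \<X>)"

definition play_vs_I :: "(nat set list \<Rightarrow> nat set) \<Rightarrow> (nat \<Rightarrow> nat set) \<Rightarrow> bool" where
  "play_vs_I \<sigma> s \<longleftrightarrow>
     (\<forall>k. finite (s k) \<and> s k \<noteq> {} \<and> s k \<subseteq> \<sigma> (map s [0..<k]))"

definition I_has_winning_strategy :: "nat set set \<Rightarrow> nat set set \<Rightarrow> bool" where
  "I_has_winning_strategy \<X> \<Z> \<longleftrightarrow>
     (\<exists>\<sigma>. strategy_I \<X> \<sigma> \<and> (\<forall>s. play_vs_I \<sigma> s \<longrightarrow> (\<Union>k. s k) \<notin> \<Z>))"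

definition strategy_II :: "nat set set \<Rightarrow> (nat set list \<Rightarrow> nat set) \<Rightarrow> bool" where
  "strategy_II \<X> \<tau> \<longleftrightarrow>
     (\<forall>xs. xs \<noteq> [] \<longrightarrow> set xs \<subseteq> \<X> \<longrightarrow>
        finite (\<tau> xs) \<and> \<tau> xs \<noteq> {} \<and> \<tau> xs \<subseteq> last xs)"

definition II_has_winning_strategy :: "nat set set \<Rightarrow> nat set set \<Rightarrow> bool" where
  "II_has_winning_strategy \<X> \<Z> \<longleftrightarrow>
     (\<exists>\<tau>. strategy_II \<X> \<tau> \<and>
        (\<forall>X :: nat \<Rightarrow> nat set. (\<forall>k. X k \<in> \<X>) \<longrightarrow>
           (\<Union>k. \<tau> (map X [0..<Suc k])) \<in> \<Z>))"

end

(*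
  Player I wins when F is not a P-filter, by playing the finite intersections of a sequence in F
  that has no pseudo-intersection in F. Player I also wins when F is meager: by Talagrand's
  characterization there is an interval partition such that every member of F meets all but
  finitely many intervals, and I forces II to skip infinitely many intervals by always demanding
  numbers beyond the interval that follows everything played so far.

  Conversely, let F be a non-meager P-filter and sigma a strategy for I. For each n, the moves
  sigma h on the finitely many histories h of at most n subsets of {..<n} intersect to a set in F;
  a pseudo-intersection X in F of these countably many sets lies in every such sigma h beyond
  some bound g(n). For an interval partition growing faster than g,
  non-meagerness yields B in F, B a subset of X, missing infinitely many intervals; the successive
  pieces of B between missed intervals form a play against sigma whose union contains a tail of B.

  Player II never wins: in two simultaneous plays where I only plays tails, each chosen beyond
  all answers of II in both plays so far, the unions of II's answers are disjoint, so they cannot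
  both belong to F.
*)

theory Submission
  imports Defs
begin

lemma is_filter_Int: "is_filter F \<Longrightarrow> A \<in> F \<Longrightarrow> B \<in> F \<Longrightarrow> A \<inter> B \<in> F"
  unfolding is_filter_def by blast

lemma is_filter_superset: "is_filter F \<Longrightarrow> A \<in> F \<Longrightarrow> A \<subseteq> B \<Longrightarrow> B \<in> F"
  unfolding is_filter_def by blast

lemma is_filter_atLeast: "is_filter F \<Longrightarrow> {n..} \<in> F"
  unfolding is_filter_def by (simp add: Compl_atLeast)

lemma is_filter_Inter:
  assumes "is_filter F" "finite S" "S \<noteq> {}" "S \<subseteq> F"
  shows "\<Inter> S \<in> F"
  using assms(2-4)
proof (induction S rule: finite_ne_induct)
  case (insert X S)
  then show ?case using is_filter_Int[OF assms(1)] by simp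
qed simp

lemma P_filterD:
  fixes Xs :: "nat \<Rightarrow> nat set"
  assumes "P_filter F" "\<And>n. Xs n \<in> F"
  obtains X where "X \<in> F" "\<And>n. finite (X - Xs n)"
  using assms unfolding P_filter_def by blast

section \<open>Cylinders and nowhere dense sets in Cantor space\<close>

definition cylinder :: "nat \<Rightarrow> nat set \<Rightarrow> (nat \<Rightarrow> bool) set" where
  "cylinder m t = {x. \<forall>j<m. x j = (j \<in> t)}"

lemma open_cylinder: "open (cylinder m t)"
proof -
  have "open {x::nat \<Rightarrow> bool. \<forall>j\<in>{..<m}. x (id j) \<in> {j \<in> t}}"
    by (rule product_topology_basis') (auto intro: open_discrete)
  moreover have "{x::nat \<Rightarrow> bool. \<forall>j\<in>{..<m}. x (id j) \<in> {j \<in> t}} = cylinder m t"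
    by (auto simp: cylinder_def)
  ultimately show ?thesis by simp
qed

lemma char_fun_in_cylinder: "char_fun A \<in> cylinder m t \<longleftrightarrow> A \<inter> {..<m} = t \<inter> {..<m}"
  by (auto simp: cylinder_def char_fun_def)

lemma cylinder_subset:
  assumes "m \<le> m'" "t' \<inter> {..<m} = t \<inter> {..<m}"
  shows "cylinder m' t' \<subseteq> cylinder m t"
  using assms by (auto simp: cylinder_def set_eq_iff)

lemma open_contains_cylinder:
  assumes "open U" "x \<in> U"
  shows "\<exists>m. cylinder m {j. x j} \<subseteq> U"
proof -
  have "openin (product_topology (\<lambda>i. euclidean) UNIV) U"
    using assms(1) by (simp add: open_fun_def)
  then obtain V where V: "finite {i. V i \<noteq> UNIV}" "x \<in> Pi\<^sub>E UNIV V" "Pi\<^sub>E UNIV V \<subseteq> U"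
    using assms(2) unfolding openin_product_topology_alt by auto
  obtain m where m: "\<And>i. V i \<noteq> UNIV \<Longrightarrow> i < m"
    using finite_nat_bounded[OF V(1)] by auto
  have "cylinder m {j. x j} \<subseteq> Pi\<^sub>E UNIV V"
  proof
    fix y assume "y \<in> cylinder m {j. x j}"
    then have "y i \<in> V i" for i
      using V(2) m[of i] by (cases "i < m") (auto simp: cylinder_def)
    then show "y \<in> Pi\<^sub>E UNIV V" by auto
  qed
  with V(3) show ?thesis by blast
qed

lemma nowhere_dense_cylinder_extension:
  assumes "nowhere_dense N"
  shows "\<exists>m'\<ge>m. \<exists>t'. t' \<inter> {..<m} = t \<inter> {..<m} \<and> cylinder m' t' \<inter> N = {}"
proof -
  have "\<not> cylinder m t \<subseteq> closure N"
  proof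
    assume "cylinder m t \<subseteq> closure N"
    then have "cylinder m t \<subseteq> interior (closure N)"
      using open_cylinder interior_maximal by blast
    moreover have "char_fun t \<in> cylinder m t" by (simp add: char_fun_in_cylinder)
    ultimately show False using assms unfolding nowhere_dense_def by blast
  qed
  then obtain x where x: "x \<in> cylinder m t" "x \<notin> closure N" by blast
  have "open (cylinder m t - closure N)" by (intro open_Diff open_cylinder closed_closure)
  then obtain m0 where m0: "cylinder m0 {j. x j} \<subseteq> cylinder m t - closure N"
    using open_contains_cylinder x by blast
  have "cylinder (max m m0) {j. x j} \<subseteq> cylinder m0 {j. x j}"
    by (rule cylinder_subset) auto
  then have "cylinder (max m m0) {j. x j} \<inter> N = {}"
    using m0 closure_subset[of N] by blast
  moreover have "{j. x j} \<inter> {..<m} = t \<inter> {..<m}"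
    using x(1) by (auto simp: cylinder_def)
  ultimately show ?thesis by (intro exI[of _ "max m m0"]) auto
qed

lemma nowhere_dense_if_cylinder_extensions:
  assumes "\<And>m t. \<exists>m' t'. t' \<inter> {..<m} = t \<inter> {..<m} \<and> cylinder m' t' \<inter> N = {}"
  shows "nowhere_dense N"
  unfolding nowhere_dense_def
proof (rule ccontr)
  assume "interior (closure N) \<noteq> {}"
  then obtain x where "x \<in> interior (closure N)" by auto
  then obtain m where "cylinder m {j. x j} \<subseteq> interior (closure N)"
    using open_contains_cylinder[OF open_interior] by blast
  then have m: "cylinder m {j. x j} \<subseteq> closure N"
    using interior_subset by blast
  obtain m' t' where t': "t' \<inter> {..<m} = {j. x j} \<inter> {..<m}" "cylinder m' t' \<inter> N = {}"
    using assms[of m "{j. x j}"] by blast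
  let ?V = "cylinder m' t' \<inter> cylinder m {j. x j}"
  have "open ?V" by (intro open_Int open_cylinder)
  then have "?V \<inter> closure N = {}"
    using open_Int_closure_eq_empty[of ?V N] t'(2) by blast
  moreover have "char_fun t' \<in> ?V" using t'(1) by (simp add: char_fun_in_cylinder)
  ultimately show False using m by blast
qed

lemma nowhere_dense_Un:
  assumes "nowhere_dense A" "nowhere_dense B"
  shows "nowhere_dense (A \<union> B)"
proof -
  have "interior (closure A \<union> closure B) = interior (closure A)"
    using assms(2) by (intro interior_closed_Un_empty_interior) (auto simp: nowhere_dense_def)
  then show ?thesis
    using assms(1) by (simp add: nowhere_dense_def)
qed

lemma nowhere_dense_UN:
  assumes "finite I" "\<And>i. i \<in> I \<Longrightarrow> nowhere_dense (N i)"
  shows "nowhere_dense (\<Union>i\<in>I. N i)"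
  using assms
proof (induction I rule: finite_induct)
  case empty
  show ?case by (simp add: nowhere_dense_def)
next
  case (insert i I)
  then show ?case by (simp add: nowhere_dense_Un)
qed

lemma nowhere_dense_common_extension:
  assumes "nowhere_dense N" "finite T" "\<And>t. t \<in> T \<Longrightarrow> t \<subseteq> {..<a}"
  shows "\<exists>b>a. \<exists>s\<subseteq>{a..<b}. \<forall>t\<in>T. cylinder b (t \<union> s) \<inter> N = {}"
  using assms(2,3)
proof (induction T rule: finite_induct)
  case empty
  show ?case by (intro exI[of _ "Suc a"] exI[of _ "{}"]) auto
next
  case (insert t T)
  then obtain b s where b: "b > a" "s \<subseteq> {a..<b}" "\<forall>t\<in>T. cylinder b (t \<union> s) \<inter> N = {}"
    by auto
  have t: "t \<subseteq> {..<a}" using insert.prems by simp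
  obtain m' t' where m': "m' \<ge> b" "t' \<inter> {..<b} = (t \<union> s) \<inter> {..<b}" "cylinder m' t' \<inter> N = {}"
    using nowhere_dense_cylinder_extension[OF assms(1), of b "t \<union> s"] by blast
  define s' where "s' = t' \<inter> {a..<m'}"
  have t'_below_a: "t' \<inter> {..<a} = t"
  proof -
    have "t' \<inter> {..<a} = (t' \<inter> {..<b}) \<inter> {..<a}" using b(1) by auto
    also have "\<dots> = t" using m'(2) b(1,2) t by auto
    finally show ?thesis .
  qed
  have "s' \<inter> {..<b} = s"
  proof -
    have "s' \<inter> {..<b} = (t' \<inter> {..<b}) \<inter> {a..<b}" using m'(1) by (auto simp: s'_def)
    also have "\<dots> = s" using m'(2) b(2) t by auto
    finally show ?thesis .
  qed
  then have "cylinder m' (u \<union> s') \<subseteq> cylinder b (u \<union> s)" if "u \<in> T" for u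
    using m'(1) by (intro cylinder_subset) auto
  moreover have "(t \<union> s') \<inter> {..<m'} = t' \<inter> {..<m'}"
    using t'_below_a t b(1) m'(1) by (auto simp: s'_def)
  then have "cylinder m' (t \<union> s') \<subseteq> cylinder m' t'"
    by (intro cylinder_subset) auto
  ultimately have "\<forall>u\<in>insert t T. cylinder m' (u \<union> s') \<inter> N = {}"
    using b(3) m'(3) by blast
  moreover have "s' \<subseteq> {a..<m'}" by (simp add: s'_def)
  ultimately show ?case using b(1) m'(1) by (intro exI[of _ m'] exI[of _ s']) auto
qed

section \<open>Meager families and interval partitions\<close>

definition missed_blocks :: "(nat \<Rightarrow> nat) \<Rightarrow> nat set \<Rightarrow> nat set" where
  "missed_blocks m A = {i. A \<inter> {m i..<m (Suc i)} = {}}"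

lemma strict_mono_blocks_disjoint:
  assumes "strict_mono (m :: nat \<Rightarrow> nat)" "i \<noteq> j"
  shows "{m i..<m (Suc i)} \<inter> {m j..<m (Suc j)} = {}"
proof (cases "i < j")
  case True
  then have "m (Suc i) \<le> m j" using assms(1) by (simp add: strict_mono_less_eq)
  then show ?thesis by auto
next
  case False
  then have "m (Suc j) \<le> m i" using assms by (simp add: strict_mono_less_eq)
  then show ?thesis by auto
qed

lemma meager_family_if_finite_missed_blocks:
  assumes m: "strict_mono m" and fin: "\<And>A. A \<in> F \<Longrightarrow> finite (missed_blocks m A)"
  shows "meager_family F"
proof -
  define M where "M n = {x. \<forall>i\<ge>n. \<exists>j\<in>{m i..<m (Suc i)}. x j}" for n
  have "char_fun A \<in> (\<Union>n. M n)" if A: "A \<in> F" for A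
  proof -
    obtain n where n: "\<And>i. i \<in> missed_blocks m A \<Longrightarrow> i < n"
      using finite_nat_bounded[OF fin[OF A]] by auto
    have "A \<inter> {m i..<m (Suc i)} \<noteq> {}" if "n \<le> i" for i
      using n[of i] that by (auto simp: missed_blocks_def)
    then have "char_fun A \<in> M n"
      unfolding M_def char_fun_def by blast
    then show ?thesis by blast
  qed
  moreover have "nowhere_dense (M n)" for n
  proof (rule nowhere_dense_if_cylinder_extensions)
    fix m0 t
    let ?i = "max n m0"
    have "m0 \<le> m ?i" using strict_mono_imp_increasing[OF m, of ?i] by simp
    have "cylinder (m (Suc ?i)) (t \<inter> {..<m0}) \<inter> M n = {}"
    proof (rule ccontr)
      assume "\<not> ?thesis"
      then obtain x where x: "x \<in> cylinder (m (Suc ?i)) (t \<inter> {..<m0})" "x \<in> M n" by blast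
      then obtain j where j: "j \<in> {m ?i..<m (Suc ?i)}" "x j"
        using max.cobounded1[of n m0] unfolding M_def by blast
      then have "j < m0" using x(1) by (auto simp: cylinder_def)
      then show False using j(1) \<open>m0 \<le> m ?i\<close> by auto
    qed
    then show "\<exists>m' t'. t' \<inter> {..<m0} = t \<inter> {..<m0} \<and> cylinder m' t' \<inter> M n = {}"
      by (intro exI[of _ "m (Suc ?i)"] exI[of _ "t \<inter> {..<m0}"]) auto
  qed
  ultimately show ?thesis
    unfolding meager_family_def meager_def by (intro exI[of _ M]) blast
qed

lemma char_fun_fill_missed_blocks_notin:
  assumes m: "strict_mono m" and s_block: "\<And>j. s j \<subseteq> {m j..<m (Suc j)}"
    and avoid: "\<And>t. t \<subseteq> {..<m i} \<Longrightarrow> cylinder (m (Suc i)) (t \<union> s i) \<inter> N = {}"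
    and i: "i \<in> missed_blocks m A"
  shows "char_fun (A \<union> (\<Union>j\<in>missed_blocks m A. s j)) \<notin> N"
proof -
  define A' where "A' = A \<union> (\<Union>j\<in>missed_blocks m A. s j)"
  have "j = i" if "x \<in> s j" "x \<in> {m i..<m (Suc i)}" for j x
    using s_block[of j] strict_mono_blocks_disjoint[OF m, of j i] that by blast
  then have "A' \<inter> {m i..<m (Suc i)} = s i"
    using i s_block[of i] unfolding A'_def missed_blocks_def by blast
  moreover have "m i \<le> m (Suc i)" using m by (simp add: strict_mono_less_eq)
  ultimately have "A' \<inter> {..<m (Suc i)} = ((A' \<inter> {..<m i}) \<union> s i) \<inter> {..<m (Suc i)}"
    using s_block[of i] by auto
  then have "char_fun A' \<in> cylinder (m (Suc i)) ((A' \<inter> {..<m i}) \<union> s i)"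
    by (simp add: char_fun_in_cylinder)
  moreover have "cylinder (m (Suc i)) ((A' \<inter> {..<m i}) \<union> s i) \<inter> N = {}"
    by (rule avoid) blast
  ultimately show ?thesis unfolding A'_def by blast
qed

lemma finite_missed_blocks_if_meager_family:
  assumes "meager_family F" and up: "\<And>A B. A \<in> F \<Longrightarrow> A \<subseteq> B \<Longrightarrow> B \<in> F"
  shows "\<exists>m. strict_mono m \<and> (\<forall>A\<in>F. finite (missed_blocks m A))"
proof -
  obtain N :: "nat \<Rightarrow> (nat \<Rightarrow> bool) set"
    where nd: "\<And>n. nowhere_dense (N n)" and cover: "char_fun ` F \<subseteq> (\<Union>n. N n)"
    using assms(1) unfolding meager_family_def meager_def by blast
  define M where "M i = (\<Union>j\<le>i. N j)" for i
  have "nowhere_dense (M i)" for i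
    unfolding M_def using nd by (auto intro: nowhere_dense_UN)
  then have "\<exists>b>a. \<exists>s\<subseteq>{a..<b}. \<forall>t\<in>Pow {..<a}. cylinder b (t \<union> s) \<inter> M i = {}" for a i
    by (rule nowhere_dense_common_extension) auto
  then obtain nxt blk where nxt: "\<And>a i. nxt a i > a" and blk: "\<And>a i. blk a i \<subseteq> {a..<nxt a i}"
    and avoid: "\<And>a i. \<forall>t\<in>Pow {..<a}. cylinder (nxt a i) (t \<union> blk a i) \<inter> M i = {}"
    by metis
  define m where "m = rec_nat 0 (\<lambda>i a. nxt a i)"
  have m_Suc: "m (Suc i) = nxt (m i) i" for i by (simp add: m_def)
  have m: "strict_mono m" by (rule strict_monoI_Suc) (simp add: m_Suc nxt)
  define s where "s i = blk (m i) i" for i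
  have "finite (missed_blocks m A)" if A: "A \<in> F" for A
  proof (rule ccontr)
    assume "infinite (missed_blocks m A)"
    define A' where "A' = A \<union> (\<Union>j\<in>missed_blocks m A. s j)"
    have "A' \<in> F" using up[OF A] by (simp add: A'_def)
    then obtain n where "char_fun A' \<in> N n" using cover by blast
    obtain i where i: "i \<in> missed_blocks m A" "n \<le> i"
      using \<open>infinite (missed_blocks m A)\<close> unfolding infinite_nat_iff_unbounded_le by blast
    have "char_fun A' \<notin> M i"
      unfolding A'_def
    proof (rule char_fun_fill_missed_blocks_notin[OF m _ _ i(1)])
      show "s j \<subseteq> {m j..<m (Suc j)}" for j using blk by (simp add: s_def m_Suc)
      show "cylinder (m (Suc i)) (t \<union> s i) \<inter> M i = {}" if "t \<subseteq> {..<m i}" for t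
        using avoid[of "m i" i] that by (simp add: s_def m_Suc)
    qed
    then show False
      using \<open>char_fun A' \<in> N n\<close> i(2) by (auto simp: M_def)
  qed
  with m show ?thesis by blast
qed

section \<open>Player I\<close>

lemma I_has_winning_strategy_if_not_P_filter:
  assumes F: "is_filter F" and "\<not> P_filter F"
  shows "I_has_winning_strategy F F"
proof -
  obtain Xs :: "nat \<Rightarrow> nat set" where Xs: "\<And>n. Xs n \<in> F"
    and no_pseudo_intersection: "\<not> (\<exists>X\<in>F. \<forall>n. finite (X - Xs n))"
    using assms unfolding P_filter_def by blast
  define \<sigma> where "\<sigma> h = \<Inter> (Xs ` {..length h})" for h :: "nat set list"
  have "\<sigma> h \<in> F" for h
    unfolding \<sigma>_def by (rule is_filter_Inter[OF F]) (use Xs in auto)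
  then have "strategy_I F \<sigma>" by (simp add: strategy_I_def)
  moreover have "(\<Union>k. s k) \<notin> F" if play: "play_vs_I \<sigma> s" for s
  proof
    assume "(\<Union>k. s k) \<in> F"
    moreover have "finite ((\<Union>k. s k) - Xs n)" for n
    proof (rule finite_subset)
      have late: "s k \<subseteq> Xs n" if "n \<le> k" for k
        using play that unfolding play_vs_I_def \<sigma>_def by auto
      show "(\<Union>k. s k) - Xs n \<subseteq> (\<Union>k<n. s k)"
      proof
        fix x assume "x \<in> (\<Union>k. s k) - Xs n"
        then obtain k where "x \<in> s k" "x \<notin> Xs n" by blast
        moreover from this have "k < n" using late by (meson not_le subsetD)
        ultimately show "x \<in> (\<Union>k<n. s k)" by blast
      qed
      show "finite (\<Union>k<n. s k)"
        using play unfolding play_vs_I_def by simp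
    qed
    ultimately show False using no_pseudo_intersection by blast
  qed
  ultimately show ?thesis unfolding I_has_winning_strategy_def by blast
qed

lemma infinite_missed_blocks_if_above_previous:
  fixes m :: "nat \<Rightarrow> nat" and s :: "nat \<Rightarrow> nat set"
  assumes m: "strict_mono m" and fin: "\<And>k. finite (s k)" and ne: "\<And>k. s k \<noteq> {}"
    and above: "\<And>k. s k \<subseteq> {m (Suc (Suc (Max (insert 0 (\<Union>j<k. s j)))))..}"
  shows "infinite (missed_blocks m (\<Union>k. s k))"
proof -
  define R where "R k = Max (insert 0 (\<Union>j<k. s j))" for k
  have above_R: "m (Suc (Suc (R k))) \<le> x" if "x \<in> s k" for x k
    using above[of k] that by (auto simp: R_def)
  have below_R: "x \<le> R k" if "x \<in> s j" "j < k" for x j k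
    unfolding R_def using that fin by (intro Max_ge) auto
  have m_ge: "i \<le> m i" for i using strict_mono_imp_increasing[OF m] .
  have R: "strict_mono R"
  proof (rule strict_monoI_Suc)
    fix k
    obtain x where x: "x \<in> s k" using ne by blast
    have "R k < m (Suc (Suc (R k)))" using m_ge[of "Suc (Suc (R k))"] by simp
    also have "\<dots> \<le> x" using above_R[OF x] .
    also have "x \<le> R (Suc k)" using below_R[OF x] by simp
    finally show "R k < R (Suc k)" .
  qed
  have "Suc (R k) \<in> missed_blocks m (\<Union>k. s k)" for k
  proof -
    have "x \<notin> {m (Suc (R k))..<m (Suc (Suc (R k)))}" if "x \<in> s j" for x j
    proof (cases "j < k")
      case True
      then show ?thesis using below_R[OF that True] m_ge[of "Suc (R k)"] by simp
    next
      case False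
      then have "m (Suc (Suc (R k))) \<le> m (Suc (Suc (R j)))"
        using R m by (simp add: strict_mono_less_eq)
      then show ?thesis using above_R[OF that] by simp
    qed
    then show ?thesis by (auto simp: missed_blocks_def)
  qed
  then have "range (\<lambda>k. Suc (R k)) \<subseteq> missed_blocks m (\<Union>k. s k)" by blast
  moreover have "infinite (range (\<lambda>k. Suc (R k)))"
    using R by (intro range_inj_infinite strict_mono_imp_inj_on) (simp add: strict_mono_def)
  ultimately show ?thesis using finite_subset by blast
qed

lemma I_has_winning_strategy_if_meager_family:
  assumes F: "is_filter F" and "meager_family F"
  shows "I_has_winning_strategy F F"
proof -
  have "\<exists>m. strict_mono m \<and> (\<forall>A\<in>F. finite (missed_blocks m A))"
    by (rule finite_missed_blocks_if_meager_family[OF assms(2)]) (use is_filter_superset[OF F] in blast)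
  then obtain m :: "nat \<Rightarrow> nat"
    where m: "strict_mono m" and fin: "\<forall>A\<in>F. finite (missed_blocks m A)"
    by blast
  \<comment> \<open>if \<open>r\<close> is the largest number played so far, block \<open>Suc r\<close> lies strictly between it and I's demand\<close>
  define \<sigma> where "\<sigma> h = {m (Suc (Suc (Max (insert 0 (\<Union> (set h))))))..}" for h :: "nat set list"
  have "strategy_I F \<sigma>"
    unfolding strategy_I_def \<sigma>_def using is_filter_atLeast[OF F] by blast
  moreover have "(\<Union>k. s k) \<notin> F" if "play_vs_I \<sigma> s" for s
  proof -
    have s: "finite (s k)" "s k \<noteq> {}" "s k \<subseteq> \<sigma> (map s [0..<k])" for k
      using that unfolding play_vs_I_def by auto
    have "\<sigma> (map s [0..<k]) = {m (Suc (Suc (Max (insert 0 (\<Union>j<k. s j)))))..}" for k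
      by (simp add: \<sigma>_def atLeast0LessThan)
    then have "infinite (missed_blocks m (\<Union>k. s k))"
      using infinite_missed_blocks_if_above_previous[OF m s(1,2)] s(3) by simp
    then show ?thesis using fin by blast
  qed
  ultimately show ?thesis unfolding I_has_winning_strategy_def by blast
qed

lemma P_filter_almost_contained_in_strategy:
  fixes \<sigma> :: "nat set list \<Rightarrow> nat set"
  assumes P: "P_filter F" and \<sigma>: "\<And>h. \<sigma> h \<in> F"
  obtains X g where "X \<in> F"
    and "\<And>n h. set h \<subseteq> Pow {..<n} \<Longrightarrow> length h \<le> n \<Longrightarrow> X \<inter> {g n..} \<subseteq> \<sigma> h"
proof -
  have F: "is_filter F" using P by (simp add: P_filter_def)
  define H where "H n = {h. set h \<subseteq> Pow {..<n} \<and> length h \<le> n}" for n :: nat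
  have Xs: "\<Inter> (\<sigma> ` H n) \<in> F" for n
  proof (rule is_filter_Inter[OF F])
    show "finite (\<sigma> ` H n)" unfolding H_def by (simp add: finite_lists_length_le)
    have "[] \<in> H n" by (simp add: H_def)
    then show "\<sigma> ` H n \<noteq> {}" by blast
    show "\<sigma> ` H n \<subseteq> F" using \<sigma> by blast
  qed
  obtain X where X: "X \<in> F" and fin: "\<And>n. finite (X - \<Inter> (\<sigma> ` H n))"
    using P_filterD[where Xs = "\<lambda>n. \<Inter> (\<sigma> ` H n)", OF P Xs] by blast
  have "\<forall>n. \<exists>b. X - \<Inter> (\<sigma> ` H n) \<subseteq> {..<b}"
    using finite_nat_bounded[OF fin] by blast
  then obtain g where g: "\<forall>n. X - \<Inter> (\<sigma> ` H n) \<subseteq> {..<g n}"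
    using choice[of "\<lambda>n b. X - \<Inter> (\<sigma> ` H n) \<subseteq> {..<b}"] by blast
  have "X \<inter> {g n..} \<subseteq> \<sigma> h" if "set h \<subseteq> Pow {..<n}" "length h \<le> n" for n h
  proof
    fix x assume x: "x \<in> X \<inter> {g n..}"
    then have "x \<notin> {..<g n}" by simp
    then have "x \<in> \<Inter> (\<sigma> ` H n)" using g x by blast
    moreover have "h \<in> H n" using that by (simp add: H_def)
    ultimately show "x \<in> \<sigma> h" by blast
  qed
  with X show ?thesis by (rule that)
qed

lemma strict_mono_interval_index:
  assumes c: "strict_mono (c :: nat \<Rightarrow> nat)" and "c 0 \<le> b"
  shows "\<exists>k. c k \<le> b \<and> b < c (Suc k)"
proof -
  have "b < c (Suc b)"
    using strict_mono_imp_increasing[OF c, of "Suc b"] by simp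
  then have ex: "\<exists>n. b < c n" by blast
  define n where "n = (LEAST n. b < c n)"
  have "b < c n" unfolding n_def by (rule LeastI_ex[OF ex])
  then obtain k where k: "n = Suc k"
    using \<open>c 0 \<le> b\<close> by (cases n) auto
  have "\<not> b < c k"
    using not_less_Least[of k "\<lambda>n. b < c n"] by (simp add: n_def[symmetric] k)
  with \<open>b < c n\<close> k have "c k \<le> b \<and> b < c (Suc k)" by simp
  then show ?thesis by blast
qed

lemma missed_blocks_gaps_cover_tail:
  assumes c: "strict_mono c" and e: "strict_mono e" and missed: "\<And>k. e k \<in> missed_blocks c B"
  shows "B \<inter> {c (e 0)..} \<subseteq> (\<Union>k. B \<inter> {c (Suc (e k))..<c (e (Suc k))})"
proof
  fix x assume x: "x \<in> B \<inter> {c (e 0)..}"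
  have ce: "strict_mono (c \<circ> e)" using c e by (simp add: strict_mono_def)
  obtain k where k: "c (e k) \<le> x" "x < c (e (Suc k))"
    using strict_mono_interval_index[OF ce, of x] x by auto
  have "x \<notin> {c (e k)..<c (Suc (e k))}"
    using missed[of k] x by (auto simp: missed_blocks_def)
  with k x have "x \<in> B \<inter> {c (Suc (e k))..<c (e (Suc k))}" by auto
  then show "x \<in> (\<Union>k. B \<inter> {c (Suc (e k))..<c (e (Suc k))})" by blast
qed

lemma gaps_between_missed_blocks:
  assumes c: "strict_mono c" and "infinite B" and missed: "infinite (missed_blocks c B)"
  shows "\<exists>e. strict_mono e \<and> (\<forall>k. e k \<in> missed_blocks c B) \<and>
           (\<forall>k. B \<inter> {c (Suc (e k))..<c (e (Suc k))} \<noteq> {})"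
proof -
  have "\<exists>i. i \<in> missed_blocks c B \<and> j < i \<and> B \<inter> {c (Suc j)..<c i} \<noteq> {}" for j
  proof -
    obtain x where x: "x \<in> B" "c (Suc j) \<le> x"
      using \<open>infinite B\<close> unfolding infinite_nat_iff_unbounded_le by blast
    obtain i where i: "i \<in> missed_blocks c B" "Suc (max j x) \<le> i"
      using missed unfolding infinite_nat_iff_unbounded_le by blast
    have "x < c i" using strict_mono_imp_increasing[OF c, of i] i(2) by simp
    with x i have "i \<in> missed_blocks c B \<and> j < i \<and> B \<inter> {c (Suc j)..<c i} \<noteq> {}" by auto
    then show ?thesis by blast
  qed
  then obtain nxt where nxt: "\<And>j. nxt j \<in> missed_blocks c B" "\<And>j. j < nxt j"
    "\<And>j. B \<inter> {c (Suc j)..<c (nxt j)} \<noteq> {}"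
    by metis
  define e where "e = rec_nat (nxt 0) (\<lambda>_. nxt)"
  have e_0: "e 0 = nxt 0" and e_Suc: "e (Suc k) = nxt (e k)" for k by (simp_all add: e_def)
  have "strict_mono e" by (rule strict_monoI_Suc) (simp add: e_Suc nxt)
  moreover have "e k \<in> missed_blocks c B" for k by (cases k) (simp_all add: e_0 e_Suc nxt)
  moreover have "B \<inter> {c (Suc (e k))..<c (e (Suc k))} \<noteq> {}" for k
    using nxt(3) by (simp add: e_Suc)
  ultimately show ?thesis by blast
qed

lemma play_vs_I_gaps:
  fixes \<sigma> :: "nat set list \<Rightarrow> nat set"
  assumes c: "strict_mono c" and e: "strict_mono e" and c_g: "\<And>i. g (c i) \<le> c (Suc i)"
    and "B \<subseteq> X"
    and g: "\<And>n h. set h \<subseteq> Pow {..<n} \<Longrightarrow> length h \<le> n \<Longrightarrow> X \<inter> {g n..} \<subseteq> \<sigma> h"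
    and gap: "\<And>k. B \<inter> {c (Suc (e k))..<c (e (Suc k))} \<noteq> {}"
  shows "play_vs_I \<sigma> (\<lambda>k. B \<inter> {c (Suc (e k))..<c (e (Suc k))})"
proof -
  define s where "s = (\<lambda>k. B \<inter> {c (Suc (e k))..<c (e (Suc k))})"
  have "s k \<subseteq> \<sigma> (map s [0..<k])" for k
  proof -
    have "c (e (Suc j)) \<le> c (e k)" if "j < k" for j
      using that c e by (simp add: strict_mono_less_eq strict_mono_less)
    then have "s j \<subseteq> {..<c (e k)}" if "j < k" for j
      using that by (fastforce simp: s_def)
    then have "set (map s [0..<k]) \<subseteq> Pow {..<c (e k)}" by force
    moreover have "length (map s [0..<k]) \<le> c (e k)"
      using strict_mono_imp_increasing[OF e, of k] strict_mono_imp_increasing[OF c, of "e k"] by simp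
    moreover have "s k \<subseteq> X \<inter> {g (c (e k))..}"
      using \<open>B \<subseteq> X\<close> c_g[of "e k"] by (auto simp: s_def)
    ultimately show ?thesis using g[of "map s [0..<k]" "c (e k)"] by blast
  qed
  moreover have "finite (s k)" "s k \<noteq> {}" for k
    using gap by (simp_all add: s_def)
  ultimately have "play_vs_I \<sigma> s" by (simp add: play_vs_I_def)
  then show ?thesis by (simp only: s_def)
qed

lemma not_I_has_winning_strategy_if_nonmeager_P_filter:
  assumes F: "proper_filter F" and P: "P_filter F" and nonmeager: "\<not> meager_family F"
  shows "\<not> I_has_winning_strategy F F"
proof
  assume "I_has_winning_strategy F F"
  then obtain \<sigma> :: "nat set list \<Rightarrow> nat set"
    where \<sigma>: "\<And>h. \<sigma> h \<in> F" and win: "\<And>s. play_vs_I \<sigma> s \<Longrightarrow> (\<Union>k. s k) \<notin> F"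
    unfolding I_has_winning_strategy_def strategy_I_def by blast
  have filt: "is_filter F" using F by (simp add: proper_filter_def)
  obtain X g where X: "X \<in> F"
    and g: "\<And>n h. set h \<subseteq> Pow {..<n} \<Longrightarrow> length h \<le> n \<Longrightarrow> X \<inter> {g n..} \<subseteq> \<sigma> h"
    using P_filter_almost_contained_in_strategy[where \<sigma> = \<sigma>, OF P \<sigma>] by blast
  \<comment> \<open>from \<open>c (Suc i)\<close> on, \<open>X\<close> lies inside \<open>\<sigma> h\<close> for all short histories \<open>h\<close> of subsets of \<open>{..<c i}\<close>\<close>
  define c where "c = rec_nat 0 (\<lambda>_ a. max (Suc a) (g a))"
  have c_Suc: "c (Suc i) = max (Suc (c i)) (g (c i))" for i by (simp add: c_def)
  have c: "strict_mono c" by (rule strict_monoI_Suc) (simp add: c_Suc)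
  have "\<not> (\<forall>A\<in>F. finite (missed_blocks c A))"
    using nonmeager meager_family_if_finite_missed_blocks[OF c, of F] by blast
  then obtain A where "A \<in> F" and A_missed: "infinite (missed_blocks c A)" by blast
  define B where "B = A \<inter> X"
  have "B \<in> F" unfolding B_def using is_filter_Int[OF filt \<open>A \<in> F\<close> X] .
  then have "infinite B" using F by (simp add: proper_filter_def)
  have "missed_blocks c A \<subseteq> missed_blocks c B" by (auto simp: missed_blocks_def B_def)
  then have "infinite (missed_blocks c B)" using A_missed finite_subset by blast
  then obtain e where e: "strict_mono e" and missed: "\<And>k. e k \<in> missed_blocks c B"
    and gap: "\<And>k. B \<inter> {c (Suc (e k))..<c (e (Suc k))} \<noteq> {}"
    using gaps_between_missed_blocks[OF c \<open>infinite B\<close>] by blast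
  define s where "s k = B \<inter> {c (Suc (e k))..<c (e (Suc k))}" for k
  have "play_vs_I \<sigma> s"
    unfolding s_def
  proof (rule play_vs_I_gaps[where g = g and X = X, OF c e])
    show "g (c i) \<le> c (Suc i)" for i by (simp add: c_Suc)
    show "B \<subseteq> X" by (simp add: B_def)
    show "X \<inter> {g n..} \<subseteq> \<sigma> h" if "set h \<subseteq> Pow {..<n}" "length h \<le> n" for n h
      using that by (rule g)
  qed (rule gap)
  moreover have "(\<Union>k. s k) \<in> F"
  proof (rule is_filter_superset[OF filt])
    show "B \<inter> {c (e 0)..} \<in> F" using is_filter_Int[OF filt \<open>B \<in> F\<close> is_filter_atLeast[OF filt]] .
    show "B \<inter> {c (e 0)..} \<subseteq> (\<Union>k. s k)"
      unfolding s_def using missed_blocks_gaps_cover_tail[OF c e missed] .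
  qed
  ultimately show False using win by blast
qed

section \<open>Player II\<close>

lemma sequence_defined_by_history:
  fixes f :: "'a list \<Rightarrow> 'a"
  shows "\<exists>x. \<forall>n. x n = f (map x [0..<n])"
proof -
  define hist where "hist = rec_nat [] (\<lambda>_ xs. xs @ [f xs])"
  define x where "x n = f (hist n)" for n
  have "hist n = map x [0..<n]" for n
    by (induction n) (simp_all add: hist_def x_def)
  then have "\<forall>n. x n = f (map x [0..<n])" by (simp add: x_def)
  then show ?thesis by blast
qed

definition answers :: "(nat list \<Rightarrow> nat set) \<Rightarrow> nat list \<Rightarrow> nat set" where
  "answers \<rho> ns = (\<Union>j<length ns. \<rho> (take (Suc j) ns))"

lemma finite_answers:
  assumes "\<And>ns. ns \<noteq> [] \<Longrightarrow> finite (\<rho> ns)"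
  shows "finite (answers \<rho> ns)"
  unfolding answers_def by (auto intro!: assms)

lemma answers_prefix:
  assumes "j < k"
  shows "\<rho> (map f [0..<Suc j]) \<subseteq> answers \<rho> (map f [0..<k])"
proof -
  have "j \<in> {..<length (map f [0..<k])}" using assms by simp
  then have "\<rho> (take (Suc j) (map f [0..<k])) \<subseteq> answers \<rho> (map f [0..<k])"
    unfolding answers_def by blast
  moreover have "take (Suc j) (map f [0..<k]) = map f [0..<Suc j]"
    using assms by (simp add: take_map)
  ultimately show ?thesis by simp
qed

lemma finite_subset_lessThan_Suc_Max: "finite S \<Longrightarrow> S \<subseteq> {..<Suc (Max (insert 0 S))}"
  by (auto simp: le_imp_less_Suc)

text \<open>Here \<open>\<rho> ns\<close> is II's answer after I has played the tails \<open>{n..}\<close>, \<open>n \<in> set ns\<close>;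
  \<open>a\<close> and \<open>b\<close> describe I's tails in two simultaneous plays.\<close>

lemma tail_moves_above_answers:
  fixes \<rho> :: "nat list \<Rightarrow> nat set"
  assumes fin: "\<And>ns. ns \<noteq> [] \<Longrightarrow> finite (\<rho> ns)"
  shows "\<exists>a b :: nat \<Rightarrow> nat.
           (\<forall>j k. j < k \<longrightarrow> \<rho> (map b [0..<Suc j]) \<subseteq> {..<a k}) \<and>
           (\<forall>j k. j \<le> k \<longrightarrow> \<rho> (map a [0..<Suc j]) \<subseteq> {..<b k})"
proof -
  define above where "above S = Suc (Max (insert 0 S))" for S :: "nat set"
  define step where "step hs = (let a = above (answers \<rho> (map fst hs) \<union> answers \<rho> (map snd hs))
    in (a, above (answers \<rho> (map fst hs @ [a]) \<union> answers \<rho> (map snd hs))))"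
    for hs :: "(nat \<times> nat) list"
  obtain x where x: "\<forall>n. x n = step (map x [0..<n])"
    using sequence_defined_by_history[of step] by blast
  define a where "a = fst \<circ> x"
  define b where "b = snd \<circ> x"
  have a: "a k = above (answers \<rho> (map a [0..<k]) \<union> answers \<rho> (map b [0..<k]))" for k
    using x unfolding a_def b_def by (simp add: step_def Let_def)
  have b: "b k = above (answers \<rho> (map a [0..<Suc k]) \<union> answers \<rho> (map b [0..<k]))" for k
    using x unfolding a_def b_def by (simp add: step_def Let_def)
  have above: "answers \<rho> ns \<union> answers \<rho> ms \<subseteq> {..<above (answers \<rho> ns \<union> answers \<rho> ms)}" for ns ms
    unfolding above_def by (rule finite_subset_lessThan_Suc_Max) (simp add: finite_answers[OF fin])
  have "\<rho> (map b [0..<Suc j]) \<subseteq> {..<a k}" if "j < k" for j k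
    using answers_prefix[OF that, of \<rho> b] above[of "map a [0..<k]" "map b [0..<k]"]
    by (simp only: a[of k, symmetric]) blast
  moreover have "\<rho> (map a [0..<Suc j]) \<subseteq> {..<b k}" if "j \<le> k" for j k
    using answers_prefix[OF le_imp_less_Suc[OF that], of \<rho> a] above[of "map a [0..<Suc k]" "map b [0..<k]"]
    by (simp only: b[of k, symmetric]) blast
  ultimately show ?thesis by blast
qed

lemma not_II_has_winning_strategy:
  assumes F: "is_filter F" and "{} \<notin> F"
  shows "\<not> II_has_winning_strategy F F"
proof
  assume "II_has_winning_strategy F F"
  then obtain \<tau> :: "nat set list \<Rightarrow> nat set" where \<tau>: "strategy_II F \<tau>"
    and win: "\<And>X. (\<And>k. X k \<in> F) \<Longrightarrow> (\<Union>k. \<tau> (map X [0..<Suc k])) \<in> F"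
    unfolding II_has_winning_strategy_def by blast
  define \<rho> where "\<rho> ns = \<tau> (map atLeast ns)" for ns
  have \<rho>: "finite (\<rho> ns) \<and> \<rho> ns \<subseteq> {last ns..}" if "ns \<noteq> []" for ns
  proof -
    have "set (map atLeast ns) \<subseteq> F" using is_filter_atLeast[OF F] by auto
    moreover have "map atLeast ns \<noteq> []" using that by simp
    ultimately have "finite (\<tau> (map atLeast ns)) \<and> \<tau> (map atLeast ns) \<subseteq> last (map atLeast ns)"
      using \<tau> unfolding strategy_II_def by blast
    then show ?thesis using that by (simp add: \<rho>_def last_map)
  qed
  obtain a b :: "nat \<Rightarrow> nat"
    where ba: "\<And>j k. j < k \<Longrightarrow> \<rho> (map b [0..<Suc j]) \<subseteq> {..<a k}"
      and ab: "\<And>j k. j \<le> k \<Longrightarrow> \<rho> (map a [0..<Suc j]) \<subseteq> {..<b k}"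
    using tail_moves_above_answers[of \<rho>] \<rho> by blast
  have play: "(\<Union>k. \<rho> (map f [0..<Suc k])) \<in> F" for f
    using win[of "\<lambda>k. {f k..}", OF is_filter_atLeast[OF F]] by (simp add: \<rho>_def comp_def)
  have "\<rho> (map a [0..<Suc k]) \<inter> \<rho> (map b [0..<Suc j]) = {}" for j k
  proof (cases "j < k")
    case True
    have "\<rho> (map a [0..<Suc k]) \<subseteq> {a k..}" using \<rho>[of "map a [0..<Suc k]"] by simp
    moreover have "{a k..} \<inter> {..<a k} = {}" by auto
    ultimately show ?thesis using ba[OF True] by blast
  next
    case False
    then have "\<rho> (map a [0..<Suc k]) \<subseteq> {..<b j}" using ab[of k j] by simp
    moreover have "\<rho> (map b [0..<Suc j]) \<subseteq> {b j..}" using \<rho>[of "map b [0..<Suc j]"] by simp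
    moreover have "{b j..} \<inter> {..<b j} = {}" by auto
    ultimately show ?thesis by blast
  qed
  then have "(\<Union>k. \<rho> (map a [0..<Suc k])) \<inter> (\<Union>k. \<rho> (map b [0..<Suc k])) = {}" by blast
  with is_filter_Int[OF F play[of a] play[of b]] \<open>{} \<notin> F\<close> show False by simp
qed

theorem theorem2p15:
  fixes F :: "nat set set"
  assumes "proper_filter F"
  shows "(\<not> I_has_winning_strategy F F \<longleftrightarrow> P_filter F \<and> \<not> meager_family F)
         \<and> \<not> II_has_winning_strategy F F"
proof -
  have F: "is_filter F" and "{} \<notin> F"
    using assms by (auto simp: proper_filter_def)
  have "\<not> I_has_winning_strategy F F \<longleftrightarrow> P_filter F \<and> \<not> meager_family F"
    using I_has_winning_strategy_if_not_P_filter[OF F] I_has_winning_strategy_if_meager_family[OF F]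
      not_I_has_winning_strategy_if_nonmeager_P_filter[OF assms] by blast
  moreover have "\<not> II_has_winning_strategy F F"
    using not_II_has_winning_strategy[OF F \<open>{} \<notin> F\<close>] .
  ultimately show ?thesis ..
qed

end
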